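(* Let $B\subseteq A$ be commutative unital $\mathbb{R}$-algebras with $A=B[f]$ for some $f\in A$, let $Q\subseteq B$ be an archimedean quadratic module of $B$, and let $Q'\subseteq A$ be a quadratic module of $A$ with $Q\subseteq Q'\cap B$. If either $f$ is integral over $B$, or $N-f^2\in Q'$ for some $N\in\mathbb{N}$, then $Q'$ is archimedean in $A$.
   Context: A quadratic module of a commutative unital $\mathbb{R}$-algebra $C$ is a subset $Q\subseteq C$ with $Q+Q\subseteq Q$, $c^2Q\subseteq Q$ for all $c\in C$, and $1\in Q$. It is archimedean in $C$ if for every $c\in C$ there is an integer $n\ge1$ with $n+c\in Q$. *)

theory Defs
  imports Main "HOL.Real_Vector_Spaces"
begin

text \<open>Commutative unital real algebras are modelled as types of class
  comm_ring_1 and real_algebra_1; subalgebras as subsets.\<close>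

definition subalgebra :: "'a::{comm_ring_1,real_algebra_1} set \<Rightarrow> bool" where
  "subalgebra B \<longleftrightarrow> 1 \<in> B \<and> (\<forall>x\<in>B. \<forall>y\<in>B. x + y \<in> B \<and> x * y \<in> B)
     \<and> (\<forall>r::real. \<forall>x\<in>B. r *\<^sub>R x \<in> B)"

definition adjoin :: "'a::{comm_ring_1,real_algebra_1} set \<Rightarrow> 'a \<Rightarrow> 'a set" where
  "adjoin B f = {a. \<exists>n c. (\<forall>i. c i \<in> B) \<and> a = (\<Sum>i\<le>n. c i * f ^ i)}"

definition integral_over :: "'a::comm_ring_1 set \<Rightarrow> 'a \<Rightarrow> bool" where
  "integral_over B f \<longleftrightarrow> (\<exists>n c. (\<forall>i<n. c i \<in> B) \<and> f ^ n + (\<Sum>i<n. c i * f ^ i) = 0)"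

definition quadratic_module :: "'a::comm_ring_1 set \<Rightarrow> 'a set \<Rightarrow> bool" where
  "quadratic_module C Q \<longleftrightarrow> Q \<subseteq> C \<and> (\<forall>x\<in>Q. \<forall>y\<in>Q. x + y \<in> Q)
     \<and> (\<forall>c\<in>C. \<forall>q\<in>Q. c\<^sup>2 * q \<in> Q) \<and> 1 \<in> Q"

definition archimedean_in :: "'a::comm_ring_1 set \<Rightarrow> 'a set \<Rightarrow> bool" where
  "archimedean_in C Q \<longleftrightarrow> (\<forall>c\<in>C. \<exists>n::nat. n \<ge> 1 \<and> of_nat n + c \<in> Q)"

end

theory Submission
  imports Defs Complex_Main
begin

text \<open>Order the algebra by \<open>x \<preceq> y \<longleftrightarrow> y - x \<in> Q'\<close>. The elements \<open>a\<close> with \<open>-r \<preceq> a \<preceq> r\<close> for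
  some real \<open>r\<close> form a subring \<open>H\<close> (products via \<open>4ab = (a + b)\<^sup>2 - (a - b)\<^sup>2\<close>), and \<open>Q'\<close> is
  archimedean iff \<open>H\<close> is everything. Archimedeanity of \<open>Q \<subseteq> Q'\<close> gives \<open>B \<subseteq> H\<close>, so it
  suffices to show \<open>f \<in> H\<close>. An element lies in \<open>H\<close> as soon as its square is bounded above,
  which settles the case \<open>f\<^sup>2 \<preceq> N\<close>. If \<open>f\<close> satisfies a monic equation of degree \<open>n\<close> over
  \<open>H\<close>, every power of \<open>f\<close> is an \<open>H\<close>-combination of \<open>1, f, \<dots>, f ^ (n - 1)\<close>, so every
  \<open>(f ^ m)\<^sup>2\<close> is bounded by a real multiple of \<open>s = \<Sum>i<n. (f ^ i)\<^sup>2\<close>. In particular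
  \<open>s\<^sup>2 = (\<Sum>i<n. \<Sum>j<n. (f ^ (i + j))\<^sup>2) \<preceq> K s\<close>, which forces \<open>s\<close> to be bounded, and then
  \<open>f\<^sup>2 \<preceq> K' s\<close> is bounded as well.\<close>

lemma power_in_span_of_lower_powers:
  fixes f :: "'a::comm_ring_1"
  assumes zero: "0 \<in> R" and one: "1 \<in> R"
    and diff: "\<And>x y. x \<in> R \<Longrightarrow> y \<in> R \<Longrightarrow> x - y \<in> R"
    and mult: "\<And>x y. x \<in> R \<Longrightarrow> y \<in> R \<Longrightarrow> x * y \<in> R"
    and coeffs: "\<forall>i<n. c i \<in> R" and monic: "f ^ n + (\<Sum>i<n. c i * f ^ i) = 0"
  shows "\<exists>d. (\<forall>i<n. d i \<in> R) \<and> f ^ m = (\<Sum>i<n. d i * f ^ i)"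
proof (cases n)
  case 0
  then have "(1::'a) = 0" using monic by simp
  then have "f ^ m = 0" by (metis mult_1 mult_zero_left)
  then show ?thesis using \<open>n = 0\<close> by simp
next
  case (Suc k)
  show ?thesis
  proof (induction m)
    case 0
    have "(\<Sum>i<n. (if i = 0 then 1 else 0) * f ^ i) = 1"
      unfolding Suc by (subst sum.lessThan_Suc_shift) simp
    then show ?case using zero one by (intro exI[of _ "\<lambda>i. if i = 0 then 1 else 0"]) simp
  next
    case (Suc m)
    then obtain d where d: "\<forall>i<n. d i \<in> R" "f ^ m = (\<Sum>i<n. d i * f ^ i)" by blast
    define shifted where "shifted i = (if i = 0 then 0 else d (i - 1))" for i
    have "f ^ Suc m = (\<Sum>i<k. d i * f ^ Suc i) + d k * f ^ n"
      using \<open>n = Suc k\<close> by (simp add: d(2) sum_distrib_left algebra_simps)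
    also have "(\<Sum>i<k. d i * f ^ Suc i) = (\<Sum>i<n. shifted i * f ^ i)"
      unfolding \<open>n = Suc k\<close> by (subst sum.lessThan_Suc_shift) (simp add: shifted_def)
    also have "f ^ n = - (\<Sum>i<n. c i * f ^ i)"
      using monic by (simp add: eq_neg_iff_add_eq_0)
    finally have "f ^ Suc m = (\<Sum>i<n. (shifted i - d k * c i) * f ^ i)"
      by (simp add: algebra_simps sum_subtractf sum_distrib_left)
    moreover have "shifted i - d k * c i \<in> R" if "i < n" for i
    proof (rule diff)
      show "shifted i \<in> R" using that d(1) zero by (auto simp: shifted_def)
      show "d k * c i \<in> R" by (rule mult) (use that d(1) coeffs \<open>n = Suc k\<close> in auto)
    qed
    ultimately show ?case by (intro exI[of _ "\<lambda>i. shifted i - d k * c i"]) simp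
  qed
qed

locale quadratic_module_of_algebra =
  fixes M :: "'a::{comm_ring_1,real_algebra_1} set"
  assumes quadratic_module: "quadratic_module UNIV M"
begin

lemma add_mem: "x \<in> M \<Longrightarrow> y \<in> M \<Longrightarrow> x + y \<in> M"
  using quadratic_module unfolding quadratic_module_def by blast

lemma square_mult_mem: "q \<in> M \<Longrightarrow> c\<^sup>2 * q \<in> M"
  using quadratic_module unfolding quadratic_module_def by blast

lemma one_mem: "1 \<in> M"
  using quadratic_module unfolding quadratic_module_def by blast

lemma square_mem: "c\<^sup>2 \<in> M"
  using square_mult_mem[OF one_mem, of c] by simp

lemma zero_mem: "0 \<in> M"
  using square_mem[of 0] by simp

lemma of_real_mult_mem:
  assumes "r \<ge> 0" "q \<in> M"
  shows "of_real r * q \<in> M"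
proof -
  have "of_real r = (of_real (sqrt r) :: 'a)\<^sup>2"
    using assms(1) by (simp flip: of_real_power)
  then show ?thesis using square_mult_mem[OF assms(2)] by metis
qed

lemma of_real_mem: "r \<ge> 0 \<Longrightarrow> of_real r \<in> M"
  using of_real_mult_mem[OF _ one_mem] by simp

lemma sum_mem: "finite I \<Longrightarrow> (\<And>i. i \<in> I \<Longrightarrow> g i \<in> M) \<Longrightarrow> sum g I \<in> M"
  by (induction I rule: finite_induct) (auto intro: add_mem zero_mem)

definition le_M :: "'a \<Rightarrow> 'a \<Rightarrow> bool" (infix "\<preceq>" 50) where
  "x \<preceq> y \<longleftrightarrow> y - x \<in> M"

lemma le_M_refl: "x \<preceq> x"
  by (simp add: le_M_def zero_mem)

lemma le_M_trans [trans]: "x \<preceq> y \<Longrightarrow> y \<preceq> z \<Longrightarrow> x \<preceq> z"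
  unfolding le_M_def using add_mem by fastforce

lemma add_le_M_add: "a \<preceq> b \<Longrightarrow> c \<preceq> d \<Longrightarrow> a + c \<preceq> b + d"
  unfolding le_M_def using add_mem by (fastforce simp: algebra_simps)

lemma of_real_mult_le_M: "r \<ge> 0 \<Longrightarrow> a \<preceq> b \<Longrightarrow> of_real r * a \<preceq> of_real r * b"
  unfolding le_M_def using of_real_mult_mem by (fastforce simp: algebra_simps)

lemma le_M_of_real_mult_cancel:
  assumes "r > 0" "of_real r * a \<preceq> of_real r * b"
  shows "a \<preceq> b"
proof -
  have "of_real (inverse r) * (of_real r * x) = x" for x :: 'a
    using assms(1) by (simp flip: mult.assoc of_real_mult)
  then show ?thesis using of_real_mult_le_M[OF _ assms(2), of "inverse r"] assms(1) by simp
qed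

lemma of_real_le_M_of_real: "r \<le> s \<Longrightarrow> of_real r \<preceq> of_real s"
  unfolding le_M_def using of_real_mem[of "s - r"] by (simp add: of_real_diff)

definition bounded_above :: "'a \<Rightarrow> bool" where
  "bounded_above a \<longleftrightarrow> (\<exists>r. a \<preceq> of_real r)"

definition bounded_elements :: "'a set" where
  "bounded_elements = {a. bounded_above a \<and> bounded_above (- a)}"

lemma bounded_above_le_M: "a \<preceq> b \<Longrightarrow> bounded_above b \<Longrightarrow> bounded_above a"
  unfolding bounded_above_def using le_M_trans by blast

lemma bounded_above_add: "bounded_above a \<Longrightarrow> bounded_above b \<Longrightarrow> bounded_above (a + b)"
  unfolding bounded_above_def using add_le_M_add by (metis of_real_add)

lemma bounded_above_of_real: "bounded_above (of_real r)"
  unfolding bounded_above_def using le_M_refl by blast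

lemma bounded_above_of_real_mult_cancel:
  assumes "r > 0" "bounded_above (of_real r * a)"
  shows "bounded_above a"
proof -
  obtain t where "of_real r * a \<preceq> of_real r * of_real (t / r)"
    using assms unfolding bounded_above_def by (auto simp flip: of_real_mult)
  then show ?thesis
    unfolding bounded_above_def using le_M_of_real_mult_cancel[OF assms(1)] by blast
qed

lemma bounded_above_nonneg:
  assumes "bounded_above a"
  obtains r where "r \<ge> 0" "a \<preceq> of_real r"
proof -
  obtain r where "a \<preceq> of_real r"
    using assms unfolding bounded_above_def by blast
  also have "of_real r \<preceq> of_real (max 0 r)"
    by (simp add: of_real_le_M_of_real)
  finally show ?thesis
    by (rule that[rotated]) simp
qed

lemma bounded_elementsE:
  assumes "a \<in> bounded_elements"
  obtains r where "r > 0" "a \<preceq> of_real r" "- a \<preceq> of_real r"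
proof -
  obtain r1 r2 where "a \<preceq> of_real r1" "- a \<preceq> of_real r2"
    using assms unfolding bounded_elements_def bounded_above_def by blast
  moreover have "of_real r1 \<preceq> of_real (max 1 (max r1 r2))" "of_real r2 \<preceq> of_real (max 1 (max r1 r2))"
    by (simp_all add: of_real_le_M_of_real)
  ultimately have "a \<preceq> of_real (max 1 (max r1 r2))" "- a \<preceq> of_real (max 1 (max r1 r2))"
    using le_M_trans by blast+
  then show ?thesis by (rule that[rotated]) simp
qed

lemma bounded_elementsI_square:
  assumes "bounded_above (a\<^sup>2)"
  shows "a \<in> bounded_elements"
proof -
  obtain r where r: "of_real r - a\<^sup>2 \<in> M"
    using assms unfolding bounded_above_def le_M_def by blast
  have "bounded_above b" if b: "b\<^sup>2 = a\<^sup>2" for b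
  proof -
    have "of_real (1 + r) - of_real 2 * b = (1 - b)\<^sup>2 + (of_real r - b\<^sup>2)"
      by (simp add: algebra_simps power2_eq_square)
    also have "\<dots> \<in> M"
      unfolding b by (rule add_mem[OF square_mem r])
    finally have "bounded_above (of_real 2 * b)"
      unfolding bounded_above_def le_M_def by blast
    then show ?thesis
      by (rule bounded_above_of_real_mult_cancel[rotated]) simp
  qed
  from this[of a] this[of "- a"] show ?thesis
    unfolding bounded_elements_def by simp
qed

lemma bounded_above_square:
  assumes "a \<in> bounded_elements"
  shows "bounded_above (a\<^sup>2)"
proof -
  obtain r where r: "r > 0" "of_real r - a \<in> M" "of_real r + a \<in> M"
    using assms by (elim bounded_elementsE) (simp add: le_M_def)
  define R :: 'a where "R = of_real r"
  have "2 * R * R\<^sup>2 - 2 * R * a\<^sup>2 = (R + a)\<^sup>2 * (R - a) + (R - a)\<^sup>2 * (R + a)"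
    by (simp add: algebra_simps power2_eq_square)
  also have "\<dots> \<in> M"
    using r by (simp add: R_def add_mem square_mult_mem)
  finally have "of_real (2 * r) * a\<^sup>2 \<preceq> of_real (2 * r) * R\<^sup>2"
    unfolding le_M_def by (simp add: R_def)
  then have "a\<^sup>2 \<preceq> of_real (r\<^sup>2)"
    using le_M_of_real_mult_cancel[of "2 * r"] r(1) by (simp add: R_def)
  then show ?thesis
    unfolding bounded_above_def by blast
qed

lemma bounded_elements_add:
  "a \<in> bounded_elements \<Longrightarrow> b \<in> bounded_elements \<Longrightarrow> a + b \<in> bounded_elements"
  unfolding bounded_elements_def using bounded_above_add[of "- a" "- b"] bounded_above_add
  by auto

lemma bounded_elements_uminus: "a \<in> bounded_elements \<Longrightarrow> - a \<in> bounded_elements"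
  unfolding bounded_elements_def by simp

lemma bounded_elements_diff:
  "a \<in> bounded_elements \<Longrightarrow> b \<in> bounded_elements \<Longrightarrow> a - b \<in> bounded_elements"
  using bounded_elements_add bounded_elements_uminus by (metis diff_conv_add_uminus)

lemma of_real_in_bounded_elements: "of_real r \<in> bounded_elements"
  unfolding bounded_elements_def using bounded_above_of_real[of "- r"]
  by (simp add: bounded_above_of_real)

lemma zero_in_bounded_elements: "0 \<in> bounded_elements"
  using of_real_in_bounded_elements[of 0] by simp

lemma one_in_bounded_elements: "1 \<in> bounded_elements"
  using of_real_in_bounded_elements[of 1] by simp

lemma bounded_elements_mult:
  assumes "a \<in> bounded_elements" "b \<in> bounded_elements"
  shows "a * b \<in> bounded_elements"
proof -
  have "(a + b)\<^sup>2 - of_real 4 * (a * b) = (a - b)\<^sup>2"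
    "(a - b)\<^sup>2 - of_real 4 * - (a * b) = (a + b)\<^sup>2"
    by (simp_all add: algebra_simps power2_eq_square)
  then have "of_real 4 * (a * b) \<preceq> (a + b)\<^sup>2" "of_real 4 * - (a * b) \<preceq> (a - b)\<^sup>2"
    unfolding le_M_def by (metis square_mem)+
  moreover have "bounded_above ((a + b)\<^sup>2)" "bounded_above ((a - b)\<^sup>2)"
    using assms bounded_above_square bounded_elements_add bounded_elements_diff by blast+
  ultimately have "bounded_above (of_real 4 * (a * b))" "bounded_above (of_real 4 * - (a * b))"
    using bounded_above_le_M by blast+
  then have "bounded_above (a * b)" "bounded_above (- (a * b))"
    using bounded_above_of_real_mult_cancel[of 4] by simp_all
  then show ?thesis
    unfolding bounded_elements_def by blast
qed

lemma bounded_elements_power: "a \<in> bounded_elements \<Longrightarrow> a ^ n \<in> bounded_elements"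
  by (induction n) (auto intro: bounded_elements_mult one_in_bounded_elements)

lemma bounded_elements_sum:
  "finite I \<Longrightarrow> (\<And>i. i \<in> I \<Longrightarrow> g i \<in> bounded_elements) \<Longrightarrow> sum g I \<in> bounded_elements"
  by (induction I rule: finite_induct) (auto intro: bounded_elements_add zero_in_bounded_elements)

lemma adjoin_subset_bounded_elements:
  assumes "B \<subseteq> bounded_elements" "f \<in> bounded_elements"
  shows "adjoin B f \<subseteq> bounded_elements"
  unfolding adjoin_def using assms
  by (auto intro!: bounded_elements_sum bounded_elements_mult bounded_elements_power)

lemma bounded_elements_if_archimedean:
  assumes "archimedean_in C Q" "Q \<subseteq> M" "c \<in> C" "- c \<in> C"
  shows "c \<in> bounded_elements"
proof -
  have "bounded_above x" if "x \<in> {c, - c}" for x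
  proof -
    have "- x \<in> C"
      using assms(3,4) that by auto
    then obtain n :: nat where "of_nat n + - x \<in> Q"
      using assms(1) unfolding archimedean_in_def by blast
    then have "x \<preceq> of_real (real n)"
      using assms(2) unfolding le_M_def by auto
    then show ?thesis
      unfolding bounded_above_def by blast
  qed
  then show ?thesis
    unfolding bounded_elements_def by simp
qed

lemma archimedean_if_bounded_elements_UNIV:
  assumes "bounded_elements = UNIV"
  shows "archimedean_in UNIV M"
  unfolding archimedean_in_def
proof
  fix c :: 'a
  obtain r where "- c \<preceq> of_real r"
    using assms unfolding bounded_elements_def bounded_above_def by blast
  also have "of_real r \<preceq> of_real (real (nat \<lceil>r\<rceil> + 1))"
    by (rule of_real_le_M_of_real) linarith
  finally have "- c \<preceq> of_nat (nat \<lceil>r\<rceil> + 1)"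
    by simp
  then show "\<exists>n::nat. n \<ge> 1 \<and> of_nat n + c \<in> M"
    unfolding le_M_def by (intro exI[of _ "nat \<lceil>r\<rceil> + 1"]) simp
qed

definition le_multiple :: "'a \<Rightarrow> 'a \<Rightarrow> bool" where
  "le_multiple g s \<longleftrightarrow> (\<exists>K\<ge>0. g \<preceq> of_real K * s)"

lemma le_multiple_le_M: "g \<preceq> h \<Longrightarrow> le_multiple h s \<Longrightarrow> le_multiple g s"
  unfolding le_multiple_def using le_M_trans by blast

lemma le_multiple_add:
  assumes "le_multiple g s" "le_multiple h s"
  shows "le_multiple (g + h) s"
proof -
  obtain K L where "K \<ge> 0" "L \<ge> 0" "g \<preceq> of_real K * s" "h \<preceq> of_real L * s"
    using assms unfolding le_multiple_def by blast
  then have "K + L \<ge> 0" "g + h \<preceq> of_real (K + L) * s"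
    using add_le_M_add by (auto simp: distrib_right)
  then show ?thesis
    unfolding le_multiple_def by blast
qed

lemma le_multiple_sum:
  "finite I \<Longrightarrow> (\<And>i. i \<in> I \<Longrightarrow> le_multiple (g i) s) \<Longrightarrow> le_multiple (sum g I) s"
proof (induction I rule: finite_induct)
  case empty
  show ?case
    unfolding le_multiple_def using le_M_refl[of 0] by auto
next
  case (insert i I)
  then show ?case by (simp add: le_multiple_add)
qed

lemma le_multiple_of_real_mult:
  assumes "r \<ge> 0" "le_multiple g s"
  shows "le_multiple (of_real r * g) s"
proof -
  obtain K where "K \<ge> 0" "g \<preceq> of_real K * s"
    using assms(2) unfolding le_multiple_def by blast
  then have "r * K \<ge> 0" "of_real r * g \<preceq> of_real (r * K) * s"
    using assms(1) of_real_mult_le_M by (auto simp: mult.assoc)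
  then show ?thesis
    unfolding le_multiple_def by blast
qed

lemma square_le_multiple_add:
  assumes "le_multiple (x\<^sup>2) s" "le_multiple (y\<^sup>2) s"
  shows "le_multiple ((x + y)\<^sup>2) s"
proof -
  have "of_real 2 * x\<^sup>2 + of_real 2 * y\<^sup>2 - (x + y)\<^sup>2 = (x - y)\<^sup>2"
    by (simp add: algebra_simps power2_eq_square)
  then have "(x + y)\<^sup>2 \<preceq> of_real 2 * x\<^sup>2 + of_real 2 * y\<^sup>2"
    unfolding le_M_def by (metis square_mem)
  moreover have "le_multiple (of_real 2 * x\<^sup>2 + of_real 2 * y\<^sup>2) s"
    using assms by (intro le_multiple_add le_multiple_of_real_mult) simp_all
  ultimately show ?thesis
    by (rule le_multiple_le_M)
qed

lemma square_le_multiple_mult: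
  assumes "h \<in> bounded_elements" "le_multiple (g\<^sup>2) s"
  shows "le_multiple ((h * g)\<^sup>2) s"
proof -
  obtain r where "r \<ge> 0" "h\<^sup>2 \<preceq> of_real r"
    using bounded_above_square[OF assms(1)] by (rule bounded_above_nonneg)
  have "of_real r * g\<^sup>2 - (h * g)\<^sup>2 = g\<^sup>2 * (of_real r - h\<^sup>2)"
    by (simp add: algebra_simps power_mult_distrib)
  also have "\<dots> \<in> M"
    using \<open>h\<^sup>2 \<preceq> of_real r\<close> unfolding le_M_def by (rule square_mult_mem)
  finally have "(h * g)\<^sup>2 \<preceq> of_real r * g\<^sup>2"
    unfolding le_M_def .
  moreover have "le_multiple (of_real r * g\<^sup>2) s"
    using \<open>r \<ge> 0\<close> assms(2) by (rule le_multiple_of_real_mult)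
  ultimately show ?thesis
    by (rule le_multiple_le_M)
qed

lemma square_le_multiple_sum:
  assumes "finite I" "\<And>i. i \<in> I \<Longrightarrow> d i \<in> bounded_elements"
    and "\<And>i. i \<in> I \<Longrightarrow> le_multiple ((g i)\<^sup>2) s"
  shows "le_multiple ((\<Sum>i\<in>I. d i * g i)\<^sup>2) s"
  using assms
proof (induction I rule: finite_induct)
  case empty
  show ?case
    unfolding le_multiple_def using le_M_refl[of 0] by auto
next
  case (insert i I)
  then show ?case
    by (simp add: square_le_multiple_add square_le_multiple_mult)
qed

lemma bounded_above_if_square_le_multiple:
  assumes "le_multiple (s\<^sup>2) s"
  shows "bounded_above s"
proof -
  obtain K where "s\<^sup>2 \<preceq> of_real K * s"
    using assms unfolding le_multiple_def by blast
  have "of_real (K\<^sup>2) - (2 * s - of_real K)\<^sup>2 = 2\<^sup>2 * (of_real K * s - s\<^sup>2)"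
    by (simp add: algebra_simps power2_eq_square)
  also have "\<dots> \<in> M"
    using \<open>s\<^sup>2 \<preceq> of_real K * s\<close> unfolding le_M_def by (rule square_mult_mem)
  finally have "2 * s - of_real K \<in> bounded_elements"
    by (intro bounded_elementsI_square) (unfold bounded_above_def le_M_def, blast)
  then have "bounded_above (2 * s - of_real K + of_real K)"
    unfolding bounded_elements_def by (blast intro: bounded_above_add bounded_above_of_real)
  then show ?thesis
    using bounded_above_of_real_mult_cancel[of 2 s] by simp
qed

lemma integral_in_bounded_elements:
  assumes coeffs: "\<forall>i<n. c i \<in> bounded_elements"
    and monic: "f ^ n + (\<Sum>i<n. c i * f ^ i) = 0"
  shows "f \<in> bounded_elements"
proof -
  define s where "s = (\<Sum>i<n. (f ^ i)\<^sup>2)"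
  have lower_powers: "le_multiple ((f ^ i)\<^sup>2) s" if "i < n" for i
  proof -
    have "s - (f ^ i)\<^sup>2 = (\<Sum>j\<in>{..<n} - {i}. (f ^ j)\<^sup>2)"
      unfolding s_def using that by (simp add: sum_diff1)
    also have "\<dots> \<in> M"
      by (intro sum_mem square_mem) simp
    finally have "(f ^ i)\<^sup>2 \<preceq> of_real 1 * s"
      unfolding le_M_def by simp
    then show ?thesis
      unfolding le_multiple_def by (blast intro: zero_le_one)
  qed
  have powers: "le_multiple ((f ^ m)\<^sup>2) s" for m
  proof -
    obtain d where d: "\<forall>i<n. d i \<in> bounded_elements" "f ^ m = (\<Sum>i<n. d i * f ^ i)"
      using power_in_span_of_lower_powers[OF zero_in_bounded_elements one_in_bounded_elements
          bounded_elements_diff bounded_elements_mult coeffs monic] by blast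
    have "le_multiple ((\<Sum>i<n. d i * f ^ i)\<^sup>2) s"
      by (rule square_le_multiple_sum) (use d(1) lower_powers in auto)
    then show ?thesis
      unfolding d(2) .
  qed
  have "s\<^sup>2 = (\<Sum>i<n. \<Sum>j<n. (f ^ (i + j))\<^sup>2)"
    unfolding s_def power2_eq_square by (simp add: sum_product power_add algebra_simps)
  then have "le_multiple (s\<^sup>2) s"
    using powers by (simp add: le_multiple_sum)
  then obtain S where "s \<preceq> of_real S"
    using bounded_above_if_square_le_multiple unfolding bounded_above_def by blast
  obtain K where "K \<ge> 0" "f\<^sup>2 \<preceq> of_real K * s"
    using powers[of 1] unfolding le_multiple_def by auto
  note \<open>f\<^sup>2 \<preceq> of_real K * s\<close>
  also have "of_real K * s \<preceq> of_real K * of_real S"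
    using \<open>K \<ge> 0\<close> \<open>s \<preceq> of_real S\<close> by (rule of_real_mult_le_M)
  finally have "f\<^sup>2 \<preceq> of_real (K * S)"
    by simp
  then show ?thesis
    by (intro bounded_elementsI_square) (unfold bounded_above_def, blast)
qed

end

theorem proposition3p6:
  fixes B :: "'a::{comm_ring_1,real_algebra_1} set"
    and f :: 'a
    and Q Q' :: "'a set"
  assumes "subalgebra B"
    and "adjoin B f = UNIV"
    and "quadratic_module B Q" and "archimedean_in B Q"
    and "quadratic_module UNIV Q'"
    and "Q \<subseteq> Q' \<inter> B"
    and "integral_over B f \<or> (\<exists>N::nat. of_nat N - f\<^sup>2 \<in> Q')"
  shows "archimedean_in UNIV Q'"
proof -
  interpret quadratic_module_of_algebra Q'
    by unfold_locales (fact assms(5))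
  have B_bounded: "B \<subseteq> bounded_elements"
  proof
    fix b assume "b \<in> B"
    moreover have "- b \<in> B"
      using assms(1) \<open>b \<in> B\<close> unfolding subalgebra_def by (metis scaleR_minus1_left)
    ultimately show "b \<in> bounded_elements"
      using bounded_elements_if_archimedean[OF assms(4)] assms(6) by blast
  qed
  have "f \<in> bounded_elements"
    using assms(7)
  proof
    assume "integral_over B f"
    then show ?thesis
      using B_bounded unfolding integral_over_def by (blast intro: integral_in_bounded_elements)
  next
    assume "\<exists>N::nat. of_nat N - f\<^sup>2 \<in> Q'"
    then have "bounded_above (f\<^sup>2)"
      unfolding bounded_above_def le_M_def by (metis of_real_of_nat_eq)
    then show ?thesis
      by (rule bounded_elementsI_square)
  qed
  then have "bounded_elements = UNIV"
    using adjoin_subset_bounded_elements[OF B_bounded] assms(2) by blast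
  then show ?thesis
    by (rule archimedean_if_bounded_elements_UNIV)
qed

end
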